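(* Consider the continuous-time control-affine system $\dot x(t)=f_c(x(t),u(t)):=f(x(t))+\sum_{i=1}^m g_i(x(t))u_i(t)$ with state $x(t)\in\mathbb{R}^n$, input $u(t)\in\mathbb{R}^m$, and $f(0)=0$. Let $\mathbb{X}\subseteq\mathbb{R}^n$ be compact and let $\widehat\Phi:\mathbb{R}^n\to\mathbb{R}^N$ be a continuously differentiable lifting satisfying $\widehat\Phi(0)=0$ and $\|x\|\le\|\widehat\Phi(x)\|\le L_\Phi\|x\|$ for all $x\in\mathbb{X}$ and some $L_\Phi>0$. Let $A\in\mathbb{R}^{N\times N}$, $B_0\in\mathbb{R}^{N\times m}$ and $\tilde B=[B_1-A,\ \dots,\ B_m-A]\in\mathbb{R}^{N\times Nm}$ (with $B_i\in\mathbb{R}^{N\times N}$) be given matrices, and define the residual $$r(x,u):=\nabla\widehat\Phi(x)^\top f_c(x,u)-A\widehat\Phi(x)-B_0u-\tilde B\,(u\otimes\widehat\Phi(x)).$$ Assume there are constants $c_x,c_u>0$ such that $\|r(x,u)\|\le c_x\|\widehat\Phi(x)\|+c_u\|u\|$ for all $x\in\mathbb{X}$ and all $u\in\mathbb{R}^m$. Suppose there exist $\alpha\in\mathbb{N}$, $\beta\in\mathbb{N}_0$ with $\alpha\ge\max\{1,\beta\}$, a symmetric matrix $P\succ0$ of size $N\times N$, a polynomial matrix $L\in\mathbb{R}[z,2\alpha-1]^{m\times N}$, $\tau\in\mathrm{SOS}_+[z,2\beta]$ and $\rho>0$ such that $Q(z)\in\mathrm{SOS}[z,2\alpha]^{2N+m}$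 in the variable $z\in\mathbb{R}^N$, where, with $M(z):=AP+B_0L(z)+\tilde B(L(z)\otimes z)$, $$Q(z)=\begin{bmatrix}-M(z)-M(z)^\top-\rho I_N-\tau(z)I_N & -P & -L(z)^\top\\ -P & \frac{\tau(z)}{2c_x^2}I_N & 0\\ -L(z) & 0 & \frac{\tau(z)}{2c_u^2}I_m\end{bmatrix}.$$ Then the controller $\mu(x)=L(\widehat\Phi(x))P^{-1}\widehat\Phi(x)$ exponentially stabilizes the origin of $\dot x=f_c(x,\mu(x))$ for all initial conditions in $\Omega(c^* )$, where $\Omega(c)=\{x\in\mathbb{R}^n:\widehat\Phi(x)^\top P^{-1}\widehat\Phi(x)\le c\}$ and $c^*=\max\{c>0:\Omega(c)\subseteq\mathbb{X}\}$. (In the paper, the residual bound, and hence the conclusion, holds with probability $1-\delta$ when $A,B_0,B_i$ are obtained from i.i.d. data via the SafEDMD regression.)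
   Context: Notation: $\otimes$ is the Kronecker product. $\mathbb{R}[z,d]$ denotes real polynomials in $z$ of degree at most $d$, and $\mathbb{R}[z,d]^{p\times q}$ the $p\times q$ matrices with entries in $\mathbb{R}[z,d]$. A matrix $S\in\mathbb{R}[z,2d]^{p\times p}$ is SOS, written $S\in\mathrm{SOS}[z,2d]^p$, if $S=T^\top T$ for some $T\in\mathbb{R}[z,d]^{q\times p}$ and some $q\in\mathbb{N}$. It is strictly SOS, written $S\in\mathrm{SOS}_+[z,2d]^p$, if $S-\varepsilon I\in\mathrm{SOS}[z,2d]^p$ for some $\varepsilon>0$; for $p=1$ the superscript is dropped. A feedback $\kappa$ exponentially stabilizes the origin in a set $\mathcal{X}$ if there exist $a,b>0$ such that the closed-loop solution satisfies $\|x(t;\hat x)\|\le a\|\hat x\|e^{-bt}$ for all $\hat x\in\mathcal{X}$ and all $t\ge0$. *)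

theory Defs
  imports "HOL-Analysis.Analysis"
begin

text \<open>A real polynomial of total degree at most d in the N coordinates of z.
  Multi-indices are functions 'N => nat; since 'N is finite, the set of
  multi-indices of total degree at most d is finite.\<close>
definition mpoly_deg :: "nat \<Rightarrow> (real^'N::finite \<Rightarrow> real) \<Rightarrow> bool" where
  "mpoly_deg d p \<longleftrightarrow>
     (\<exists>c :: ('N \<Rightarrow> nat) \<Rightarrow> real.
        p = (\<lambda>z. \<Sum>a\<in>{a::'N \<Rightarrow> nat. (\<Sum>i\<in>UNIV. a i) \<le> d}.
                     c a * (\<Prod>i\<in>UNIV. (z $ i) ^ (a i))))"

text \<open>Scalar SOS: p \<in> SOS[z,2d] iff p = T^T T with T a q x 1 column of
  polynomials of degree at most d.\<close>
definition is_SOS :: "nat \<Rightarrow> (real^'N::finite \<Rightarrow> real) \<Rightarrow> bool" where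
  "is_SOS d p \<longleftrightarrow>
     (\<exists>(q::nat) (T :: nat \<Rightarrow> real^'N \<Rightarrow> real).
        (\<forall>k<q. mpoly_deg d (T k)) \<and> (\<forall>z. p z = (\<Sum>k<q. (T k z)\<^sup>2)))"

definition is_SOS_plus :: "nat \<Rightarrow> (real^'N::finite \<Rightarrow> real) \<Rightarrow> bool" where
  "is_SOS_plus d p \<longleftrightarrow> (\<exists>\<epsilon>>0. is_SOS d (\<lambda>z. p z - \<epsilon>))"

text \<open>Matrix SOS: S \<in> SOS[z,2d]^p iff S = T^T T for some q x p polynomial
  matrix T of degree at most d; the row index set of S is the finite type 'p.\<close>
definition is_SOS_mat :: "nat \<Rightarrow> (real^'N::finite \<Rightarrow> 'p::finite \<Rightarrow> 'p \<Rightarrow> real) \<Rightarrow> bool" where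
  "is_SOS_mat d S \<longleftrightarrow>
     (\<exists>(q::nat) (T :: nat \<Rightarrow> 'p \<Rightarrow> real^'N \<Rightarrow> real).
        (\<forall>k<q. \<forall>i. mpoly_deg d (T k i)) \<and>
        (\<forall>z i j. S z i j = (\<Sum>k<q. T k i z * T k j z)))"

text \<open>u \<otimes> v for u \<in> R^m, v \<in> R^N, indexed by pairs (i,k) (block i, entry k).\<close>
definition kron_vec :: "real^'m::finite \<Rightarrow> real^'N::finite \<Rightarrow> real^('m \<times> 'N)" where
  "kron_vec u v = (\<chi> p. u $ fst p * v $ snd p)"

text \<open>L \<otimes> z for an m x N matrix L and a column vector z \<in> R^N: an (mN) x N matrix.\<close>
definition kron_mat_vec :: "real^'N::finite^'m::finite \<Rightarrow> real^'N \<Rightarrow> real^'N^('m \<times> 'N)" where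
  "kron_mat_vec L z = (\<chi> p. \<chi> j. L $ fst p $ j * z $ snd p)"

text \<open>Btilde = [B_1 - A, ..., B_m - A] as an N x (Nm) matrix, column (i,k) = column k of block i.\<close>
definition Btilde :: "real^'N::finite^'N \<Rightarrow> ('m::finite \<Rightarrow> real^'N^'N) \<Rightarrow> real^('m \<times> 'N)^'N" where
  "Btilde A B = (\<chi> j. \<chi> p. (B (fst p) - A) $ j $ snd p)"

definition fc :: "(real^'n \<Rightarrow> real^'n) \<Rightarrow> ('m::finite \<Rightarrow> real^'n \<Rightarrow> real^'n)
                  \<Rightarrow> real^'n \<Rightarrow> real^'m \<Rightarrow> real^'n" where
  "fc f g x u = f x + (\<Sum>i\<in>UNIV. u $ i *\<^sub>R g i x)"

text \<open>J x is the Jacobian of the lifting at x (an N x n matrix), so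
  nabla Phi(x)^T v = J x *v v.\<close>
definition residual ::
  "(real^'n::finite \<Rightarrow> real^'n) \<Rightarrow> ('m::finite \<Rightarrow> real^'n \<Rightarrow> real^'n)
   \<Rightarrow> (real^'n \<Rightarrow> real^'N::finite) \<Rightarrow> (real^'n \<Rightarrow> real^'n^'N)
   \<Rightarrow> real^'N^'N \<Rightarrow> real^'m^'N \<Rightarrow> ('m \<Rightarrow> real^'N^'N)
   \<Rightarrow> real^'n \<Rightarrow> real^'m \<Rightarrow> real^'N" where
  "residual f g Phi J A B0 B x u =
     J x *v fc f g x u - A *v Phi x - B0 *v u - Btilde A B *v kron_vec u (Phi x)"

definition Mmat ::
  "real^'N::finite^'N \<Rightarrow> real^'m::finite^'N \<Rightarrow> ('m \<Rightarrow> real^'N^'N) \<Rightarrow> real^'N^'N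
   \<Rightarrow> (real^'N \<Rightarrow> real^'N^'m) \<Rightarrow> real^'N \<Rightarrow> real^'N^'N" where
  "Mmat A B0 B P L z = A ** P + B0 ** L z + Btilde A B ** kron_mat_vec (L z) z"

text \<open>The (2N+m) x (2N+m) block matrix Q(z); block rows/columns indexed by
  Inl i (first N block), Inr (Inl i) (second N block), Inr (Inr k) (m block).\<close>
definition Qmat ::
  "real^'N::finite^'N \<Rightarrow> real^'m::finite^'N \<Rightarrow> ('m \<Rightarrow> real^'N^'N) \<Rightarrow> real^'N^'N
   \<Rightarrow> (real^'N \<Rightarrow> real^'N^'m) \<Rightarrow> (real^'N \<Rightarrow> real) \<Rightarrow> real \<Rightarrow> real \<Rightarrow> real
   \<Rightarrow> real^'N \<Rightarrow> ('N + 'N + 'm) \<Rightarrow> ('N + 'N + 'm) \<Rightarrow> real" where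
  "Qmat A B0 B P L tau rho cx cu z r s =
     (let M = Mmat A B0 B P L z in
      case (r, s) of
        (Inl i, Inl j) \<Rightarrow> - M $ i $ j - M $ j $ i - (if i = j then rho + tau z else 0)
      | (Inl i, Inr (Inl j)) \<Rightarrow> - P $ i $ j
      | (Inl i, Inr (Inr k)) \<Rightarrow> - L z $ k $ i
      | (Inr (Inl i), Inl j) \<Rightarrow> - P $ i $ j
      | (Inr (Inl i), Inr (Inl j)) \<Rightarrow> (if i = j then tau z / (2 * cx\<^sup>2) else 0)
      | (Inr (Inl i), Inr (Inr k)) \<Rightarrow> 0
      | (Inr (Inr k), Inl j) \<Rightarrow> - L z $ k $ j
      | (Inr (Inr k), Inr (Inl j)) \<Rightarrow> 0
      | (Inr (Inr k), Inr (Inr l)) \<Rightarrow> (if k = l then tau z / (2 * cu\<^sup>2) else 0))"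

definition pos_def_sym :: "real^'N::finite^'N \<Rightarrow> bool" where
  "pos_def_sym P \<longleftrightarrow> transpose P = P \<and> (\<forall>v. v \<noteq> 0 \<longrightarrow> v \<bullet> (P *v v) > 0)"

definition Omega :: "(real^'n \<Rightarrow> real^'N::finite) \<Rightarrow> real^'N^'N \<Rightarrow> real \<Rightarrow> (real^'n) set" where
  "Omega Phi P c = {x. Phi x \<bullet> (matrix_inv P *v Phi x) \<le> c}"

definition exp_stabilizes :: "(real^'n::finite \<Rightarrow> real^'n) \<Rightarrow> (real^'n) set \<Rightarrow> bool" where
  "exp_stabilizes F S \<longleftrightarrow>
     (\<exists>a>0. \<exists>b>0. \<forall>xh\<in>S. \<forall>x :: real \<Rightarrow> real^'n.
        (x 0 = xh \<and> (\<forall>t\<ge>0. (x has_vector_derivative F (x t)) (at t within {0..})))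
        \<longrightarrow> (\<forall>t\<ge>0. norm (x t) \<le> a * norm xh * exp (- b * t)))"

end

theory Submission
  imports Defs
begin

text \<open>The lifted quadratic form V(x) = Phi(x)^T P^-1 Phi(x) is a Lyapunov function. Writing
  v = P^-1 Phi(x), z = Phi(x) = P v and u = L(z) v, the lifted dynamics along the closed loop are
  M(z) v plus the residual r(x, u), so dV/dt = 2 v^T M(z) v + 2 v^T r. Testing the positive
  semidefinite matrix Q(z) with the vector (v, 2 c_x^2 z / tau(z), 2 c_u^2 u / tau(z)) (an
  S-procedure) bounds 2 v^T M(z) v, and Young's inequality lets the multiplier terms absorb the
  residual bound c_x |z| + c_u |u|; what remains is dV/dt <= -rho |v|^2 <= -k V. This holds on X,
  which contains the sublevel set Omega(c*), so Omega(c*) is forward invariant and V decays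
  exponentially; the sandwich |x| <= |Phi(x)| <= L_Phi |x| turns this into exponential decay
  of |x|.\<close>

section \<open>Quadratic forms\<close>

lemma inner_matrix_vector_mult_eq_sum:
  fixes M :: "real^'b::finite^'a::finite"
  shows "x \<bullet> (M *v y) = (\<Sum>i\<in>UNIV. \<Sum>j\<in>UNIV. x $ i * M $ i $ j * y $ j)"
  by (simp add: inner_vec_def matrix_vector_mult_def sum_distrib_left mult_ac)

lemma inner_matrix_vector_mult_symmetric:
  fixes S :: "real^'n::finite^'n"
  assumes "transpose S = S"
  shows "x \<bullet> (S *v y) = (S *v x) \<bullet> y"
  by (metis assms dot_lmul_matrix vector_transpose_matrix)

lemma quadratic_form_upper_bound:
  fixes P :: "real^'N::finite^'N"
  obtains K where "0 < K" "\<And>v. v \<bullet> (P *v v) \<le> K * (norm v)\<^sup>2"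
proof -
  obtain K where "0 < K" and K: "\<And>v. norm (P *v v) \<le> norm v * K"
    using bounded_linear.pos_bounded[OF matrix_vector_mul_bounded_linear[of P]] by blast
  have "v \<bullet> (P *v v) \<le> K * (norm v)\<^sup>2" for v
    using norm_cauchy_schwarz[of v "P *v v"] mult_left_mono[OF K[of v], of "norm v"]
    by (simp add: power2_eq_square mult_ac)
  with \<open>0 < K\<close> show ?thesis
    using that by blast
qed

lemma pos_def_sym_quadratic_form_lower_bound:
  fixes P :: "real^'N::finite^'N"
  assumes "pos_def_sym P"
  obtains m where "0 < m" "\<And>v. m * (norm v)\<^sup>2 \<le> v \<bullet> (P *v v)"
proof -
  let ?q = "\<lambda>v. v \<bullet> (P *v v)"
  have "continuous_on (sphere 0 1) ?q"
    by (intro continuous_intros linear_continuous_on matrix_vector_mul_bounded_linear)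
  moreover have "sphere (0::real^'N) 1 \<noteq> {}"
    by simp
  ultimately obtain e where e: "e \<in> sphere 0 1" "\<And>v. v \<in> sphere 0 1 \<Longrightarrow> ?q e \<le> ?q v"
    using continuous_attains_inf[OF compact_sphere] by blast
  have "e \<noteq> 0"
    using e(1) by auto
  then have "0 < ?q e"
    using assms unfolding pos_def_sym_def by blast
  moreover have "?q e * (norm v)\<^sup>2 \<le> ?q v" for v
  proof (cases "v = 0")
    case False
    have "?q e \<le> ?q (v /\<^sub>R norm v)"
      by (rule e(2)) (use False in simp)
    also have "\<dots> = ?q v / (norm v)\<^sup>2"
      by (simp add: matrix_vector_mult_scaleR power2_eq_square divide_inverse)
    finally show ?thesis
      using False by (simp add: field_simps)
  qed simp
  ultimately show ?thesis
    using that by blast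
qed

lemma pos_def_sym_matrix_inv_mult:
  fixes P :: "real^'N::finite^'N"
  assumes "pos_def_sym P"
  shows "P ** matrix_inv P = mat 1" "matrix_inv P ** P = mat 1"
proof -
  have "inj ((*v) P)"
  proof (rule injI)
    fix x y
    assume "P *v x = P *v y"
    then have "(x - y) \<bullet> (P *v (x - y)) = 0"
      by (simp add: matrix_vector_mult_diff_distrib)
    moreover have "x - y \<noteq> 0 \<Longrightarrow> 0 < (x - y) \<bullet> (P *v (x - y))"
      using assms unfolding pos_def_sym_def by blast
    ultimately show "x = y"
      by auto
  qed
  then have ex_inverse: "\<exists>P'. P ** P' = mat 1 \<and> P' ** P = mat 1"
    using matrix_left_invertible_injective invertible_left_inverse unfolding invertible_def by blast
  show "P ** matrix_inv P = mat 1" "matrix_inv P ** P = mat 1"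
    using someI_ex[OF ex_inverse] unfolding matrix_inv_def by auto
qed

lemma pos_def_sym_matrix_inv:
  fixes P :: "real^'N::finite^'N"
  assumes P_pd: "pos_def_sym P"
  shows "pos_def_sym (matrix_inv P)"
proof -
  note inverse = pos_def_sym_matrix_inv_mult[OF P_pd]
  have P_sym: "transpose P = P" and P_pos: "\<And>v. v \<noteq> 0 \<Longrightarrow> 0 < v \<bullet> (P *v v)"
    using P_pd unfolding pos_def_sym_def by auto
  have "transpose (matrix_inv P) ** P = mat 1"
    using arg_cong[OF inverse(1), of transpose] P_sym by (simp add: matrix_transpose_mul)
  then have "transpose (matrix_inv P) = transpose (matrix_inv P) ** (P ** matrix_inv P)"
    by (simp add: matrix_mul_assoc inverse)
  then have "transpose (matrix_inv P) = matrix_inv P"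
    by (simp add: matrix_mul_assoc \<open>transpose (matrix_inv P) ** P = mat 1\<close>)
  moreover have "0 < v \<bullet> (matrix_inv P *v v)" if "v \<noteq> 0" for v
  proof -
    have P_inv_v: "P *v (matrix_inv P *v v) = v"
      by (simp add: matrix_vector_mul_assoc inverse(1))
    with that have "0 < (matrix_inv P *v v) \<bullet> (P *v (matrix_inv P *v v))"
      by (intro P_pos) auto
    then show ?thesis
      by (simp add: P_inv_v inner_commute)
  qed
  ultimately show ?thesis
    unfolding pos_def_sym_def by blast
qed

lemma quadratic_form_comp_has_derivative:
  fixes S :: "real^'N::finite^'N" and Phi :: "'a::real_normed_vector \<Rightarrow> real^'N"
  assumes "transpose S = S" and "(Phi has_derivative Phi') (at x)"
  shows "((\<lambda>x. Phi x \<bullet> (S *v Phi x)) has_derivative (\<lambda>h. 2 * ((S *v Phi x) \<bullet> Phi' h))) (at x)"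
proof -
  have "((\<lambda>x. Phi x \<bullet> (S *v Phi x)) has_derivative (\<lambda>h. Phi x \<bullet> (S *v Phi' h) + Phi' h \<bullet> (S *v Phi x))) (at x)"
    by (rule has_derivative_inner[OF assms(2) bounded_linear.has_derivative[OF matrix_vector_mul_bounded_linear assms(2)]])
  then show ?thesis
    by (rule has_derivative_eq_rhs)
      (simp add: fun_eq_iff inner_matrix_vector_mult_symmetric[OF assms(1), of "Phi x"]
        inner_commute[of _ "S *v Phi x"])
qed

section \<open>The SOS certificate\<close>

lemma is_SOS_plus_pos: "is_SOS_plus d p \<Longrightarrow> 0 < p z"
  unfolding is_SOS_plus_def is_SOS_def by (smt (verit) sum_nonneg zero_le_power2)

lemma is_SOS_mat_quadratic_form_nonneg:
  fixes S :: "real^'N::finite \<Rightarrow> 'p::finite \<Rightarrow> 'p \<Rightarrow> real"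
  assumes "is_SOS_mat d S"
  shows "0 \<le> (\<Sum>r\<in>UNIV. \<Sum>s\<in>UNIV. w r * S z r s * w s)"
proof -
  obtain q :: nat and T where T: "\<And>i j. S z i j = (\<Sum>k<q. T k i z * T k j z)"
    using assms unfolding is_SOS_mat_def by blast
  have "(\<Sum>r\<in>UNIV. \<Sum>s\<in>UNIV. w r * S z r s * w s)
      = (\<Sum>k<q. \<Sum>r\<in>UNIV. \<Sum>s\<in>UNIV. w r * T k r z * (T k s z * w s))"
    by (simp add: T sum_distrib_left sum_distrib_right sum.swap[of _ "{..<q}"] mult_ac)
  also have "\<dots> = (\<Sum>k<q. (\<Sum>r\<in>UNIV. w r * T k r z)\<^sup>2)"
    by (simp add: power2_eq_square sum_product mult_ac)
  finally show ?thesis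
    by (simp add: sum_nonneg)
qed

lemma sum_UNIV_Plus:
  "sum g (UNIV :: ('a::finite + 'b::finite) set) = (\<Sum>i\<in>UNIV. g (Inl i)) + (\<Sum>j\<in>UNIV. g (Inr j))"
  using sum.Plus[of "UNIV :: 'a set" "UNIV :: 'b set" g] by (simp add: comp_def)

definition block_vec :: "real^'N \<Rightarrow> real^'N \<Rightarrow> real^'m \<Rightarrow> 'N + 'N + 'm \<Rightarrow> real" where
  "block_vec v a b = case_sum (($) v) (case_sum (($) a) (($) b))"

lemma Qmat_quadratic_form:
  fixes P :: "real^'N::finite^'N" and L :: "real^'N \<Rightarrow> real^'N^'m::finite"
  shows "(\<Sum>r\<in>UNIV. \<Sum>s\<in>UNIV. block_vec v a b r * Qmat A B0 B P L tau rho cx cu z r s * block_vec v a b s)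
    = - 2 * (v \<bullet> (Mmat A B0 B P L z *v v)) - (rho + tau z) * (v \<bullet> v)
      - v \<bullet> (P *v a) - a \<bullet> (P *v v) - 2 * (b \<bullet> (L z *v v))
      + tau z / (2 * cx\<^sup>2) * (a \<bullet> a) + tau z / (2 * cu\<^sup>2) * (b \<bullet> b)"
proof -
  have diagonal: "(\<Sum>i\<in>UNIV. \<Sum>j\<in>UNIV. x $ i * (if i = j then c else 0) * x $ j) = c * (x \<bullet> x)"
    for c and x :: "real^'k::finite"
    by (simp add: inner_vec_def sum_distrib_left if_distrib if_distribR mult_ac cong: if_cong)
  have transposed: "(\<Sum>i\<in>UNIV. \<Sum>j\<in>UNIV. x $ i * M $ j $ i * y $ j) = y \<bullet> (M *v x)"
    for x :: "real^'k::finite" and M :: "real^'k^'l::finite" and y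
    by (subst sum.swap) (simp add: inner_matrix_vector_mult_eq_sum mult_ac)
  show ?thesis
    unfolding block_vec_def Qmat_def Let_def
    by (simp add: sum_UNIV_Plus sum.distrib inner_matrix_vector_mult_eq_sum ring_distribs
        sum_subtractf sum_negf diagonal transposed)
qed

lemma Mmat_matrix_vector_mult:
  "Mmat A B0 B P L z *v v = A *v (P *v v) + B0 *v (L z *v v) + Btilde A B *v kron_vec (L z *v v) z"
proof -
  have "kron_vec (L z *v v) z = kron_mat_vec (L z) z *v v"
    by (simp add: vec_eq_iff kron_vec_def kron_mat_vec_def matrix_vector_mult_def
        sum_distrib_left sum_distrib_right mult_ac)
  then show ?thesis
    by (simp add: Mmat_def matrix_vector_mult_add_rdistrib matrix_vector_mul_assoc)
qed

lemma Mmat_quadratic_form_le: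
  fixes P :: "real^'N::finite^'N" and L :: "real^'N \<Rightarrow> real^'N^'m::finite"
  assumes Q_sos: "is_SOS_mat d (Qmat A B0 B P L tau rho cx cu)"
    and P_sym: "transpose P = P" and z: "z = P *v v"
    and tau_pos: "0 < tau z" and cx: "0 < cx" and cu: "0 < cu"
  shows "2 * (v \<bullet> (Mmat A B0 B P L z *v v)) + 2 * cx\<^sup>2 / tau z * (norm z)\<^sup>2
      + 2 * cu\<^sup>2 / tau z * (norm (L z *v v))\<^sup>2 \<le> - (rho + tau z) * (norm v)\<^sup>2"
proof -
  define t where "t = tau z"
  define u where "u = L z *v v"
  \<comment> \<open>for fixed v, these a and b minimise the quadratic form of Q(z)\<close>
  define a where "a = (2 * cx\<^sup>2 / t) *\<^sub>R z"
  define b where "b = (2 * cu\<^sup>2 / t) *\<^sub>R u"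
  have "v \<bullet> (P *v a) = 2 * cx\<^sup>2 / t * (z \<bullet> z)" "a \<bullet> (P *v v) = 2 * cx\<^sup>2 / t * (z \<bullet> z)"
    unfolding a_def z
    by (simp_all add: matrix_vector_mult_scaleR inner_matrix_vector_mult_symmetric[OF P_sym])
  moreover have "t / (2 * cx\<^sup>2) * (a \<bullet> a) = 2 * cx\<^sup>2 / t * (z \<bullet> z)"
    "t / (2 * cu\<^sup>2) * (b \<bullet> b) = 2 * cu\<^sup>2 / t * (u \<bullet> u)"
    unfolding a_def b_def t_def using cx cu tau_pos by (simp_all add: field_simps power2_eq_square)
  moreover have "b \<bullet> (L z *v v) = 2 * cu\<^sup>2 / t * (u \<bullet> u)"
    unfolding b_def u_def by simp
  ultimately show ?thesis
    using is_SOS_mat_quadratic_form_nonneg[OF Q_sos, of "block_vec v a b" z]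
    unfolding Qmat_quadratic_form t_def[symmetric] u_def[symmetric]
    by (simp add: power2_norm_eq_inner algebra_simps)
qed

lemma two_mult_le_weighted_squares:
  fixes x y t :: real
  assumes "0 < t"
  shows "2 * x * y \<le> t / 2 * x\<^sup>2 + 2 / t * y\<^sup>2"
proof -
  have "0 \<le> (t * x - 2 * y)\<^sup>2 / (2 * t)"
    using assms by simp
  also have "\<dots> = t / 2 * x\<^sup>2 + 2 / t * y\<^sup>2 - 2 * x * y"
    using assms by (simp add: field_simps power2_eq_square)
  finally show ?thesis by simp
qed

lemma lifted_Lyapunov_decrease:
  fixes P :: "real^'N::finite^'N" and L :: "real^'N \<Rightarrow> real^'N^'m::finite"
  assumes Q_sos: "is_SOS_mat d (Qmat A B0 B P L tau rho cx cu)"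
    and P_sym: "transpose P = P" and z: "z = P *v v"
    and residual_bound: "norm (w - A *v z - B0 *v u - Btilde A B *v kron_vec u z) \<le> cx * norm z + cu * norm u"
    and u: "u = L z *v v"
    and tau_pos: "0 < tau z" and cx: "0 < cx" and cu: "0 < cu"
  shows "2 * (v \<bullet> w) \<le> - rho * (norm v)\<^sup>2"
proof -
  define t where "t = tau z"
  define r where "r = w - A *v z - B0 *v u - Btilde A B *v kron_vec u z"
  have "w = Mmat A B0 B P L z *v v + r"
    unfolding r_def Mmat_matrix_vector_mult z u by simp
  then have "2 * (v \<bullet> w) = 2 * (v \<bullet> (Mmat A B0 B P L z *v v)) + 2 * (v \<bullet> r)"
    by (simp add: inner_add_right)
  moreover have "2 * (v \<bullet> r) \<le> 2 * norm v * (cx * norm z) + 2 * norm v * (cu * norm u)"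
    using norm_cauchy_schwarz[of v r] mult_left_mono[OF residual_bound[folded r_def], of "norm v"]
    by (simp add: algebra_simps)
  \<comment> \<open>Young's inequality with weight tau z: the residual is absorbed by the multiplier terms of Q\<close>
  moreover have "2 * norm v * (cx * norm z) \<le> t / 2 * (norm v)\<^sup>2 + 2 * cx\<^sup>2 / t * (norm z)\<^sup>2"
    "2 * norm v * (cu * norm u) \<le> t / 2 * (norm v)\<^sup>2 + 2 * cu\<^sup>2 / t * (norm u)\<^sup>2"
    using two_mult_le_weighted_squares[OF tau_pos, of "norm v" "cx * norm z"]
      two_mult_le_weighted_squares[OF tau_pos, of "norm v" "cu * norm u"]
    unfolding t_def by (simp_all add: power_mult_distrib mult_ac)
  ultimately show ?thesis
    using Mmat_quadratic_form_le[OF Q_sos P_sym z tau_pos cx cu] unfolding t_def u by (simp add: field_simps)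
qed

lemma closed_loop_lifted_Lyapunov_decrease:
  fixes P :: "real^'N::finite^'N" and L :: "real^'N \<Rightarrow> real^'N^'m::finite"
    and Phi :: "real^'n::finite \<Rightarrow> real^'N"
  assumes Q_sos: "is_SOS_mat d (Qmat A B0 B P L tau rho cx cu)" and P_pd: "pos_def_sym P"
    and residual_bound: "\<And>u. norm (residual f g Phi J A B0 B x u) \<le> cx * norm (Phi x) + cu * norm u"
    and tau_pos: "0 < tau (Phi x)" and cx: "0 < cx" and cu: "0 < cu"
  defines "v \<equiv> matrix_inv P *v Phi x"
  shows "2 * (v \<bullet> (J x *v fc f g x (L (Phi x) *v v))) \<le> - rho * (norm v)\<^sup>2"
proof (rule lifted_Lyapunov_decrease[OF Q_sos _ _ _ refl tau_pos cx cu])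
  show "transpose P = P"
    using P_pd unfolding pos_def_sym_def by simp
  show "Phi x = P *v v"
    unfolding v_def by (simp add: matrix_vector_mul_assoc pos_def_sym_matrix_inv_mult(1)[OF P_pd])
  show "norm (J x *v fc f g x (L (Phi x) *v v) - A *v Phi x - B0 *v (L (Phi x) *v v)
      - Btilde A B *v kron_vec (L (Phi x) *v v) (Phi x)) \<le> cx * norm (Phi x) + cu * norm (L (Phi x) *v v)"
    using residual_bound unfolding residual_def .
qed

section \<open>Lyapunov functions\<close>

lemma stays_below_right_if_has_real_derivative:
  fixes V :: "real \<Rightarrow> real"
  assumes deriv: "(V has_real_derivative D) (at t within {0..})"
    and t: "t \<ge> 0" and le: "V t \<le> c" and at_level: "V t = c \<Longrightarrow> D < 0"
  shows "\<exists>d>0. \<forall>h. 0 < h \<longrightarrow> h < d \<longrightarrow> V (t + h) < c"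
proof (cases "V t = c")
  case True
  from has_real_derivative_neg_dec_right[OF deriv at_level[OF True]]
  obtain d where "d > 0" "\<And>h. 0 < h \<Longrightarrow> t + h \<in> {0..} \<Longrightarrow> h < d \<Longrightarrow> V (t + h) < V t"
    by blast
  with t True show ?thesis by auto
next
  case False
  with le have "V t < c" by simp
  moreover have "(V \<longlongrightarrow> V t) (at t within {0..})"
    using DERIV_continuous[OF deriv] by (simp add: continuous_within)
  ultimately have "eventually (\<lambda>s. V s < c) (at t within {0..})"
    by (rule order_tendstoD(2)[rotated])
  then obtain d where "d > 0" "\<And>s. s \<in> {0..} \<Longrightarrow> s \<noteq> t \<Longrightarrow> dist s t < d \<Longrightarrow> V s < c"
    unfolding eventually_at by blast
  with t show ?thesis by (intro exI[of _ d]) (auto simp: dist_real_def)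
qed

lemma sublevel_invariant_if_has_real_derivative:
  fixes V D :: "real \<Rightarrow> real"
  assumes deriv: "\<And>t. t \<ge> 0 \<Longrightarrow> (V has_real_derivative D t) (at t within {0..})"
    and at_level: "\<And>t. t \<ge> 0 \<Longrightarrow> V t = c \<Longrightarrow> D t < 0"
    and V0: "V 0 \<le> c" and t1: "t1 \<ge> 0"
  shows "V t1 \<le> c"
proof (rule ccontr)
  assume above: "\<not> V t1 \<le> c"
  have "continuous_on {0..t1} V"
    using deriv by (metis DERIV_continuous atLeastAtMost_iff continuous_on_eq_continuous_within
        continuous_within_subset atLeast_iff subsetI)
  define S where "S = {0..t1} \<inter> V -` {..c}"
  have "closed S"
    unfolding S_def by (rule continuous_closed_preimage[OF \<open>continuous_on {0..t1} V\<close>]) auto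
  have "0 \<in> S" and "bdd_above S"
    using V0 t1 unfolding S_def by (auto intro: bdd_aboveI[of _ t1])
  define t0 where "t0 = Sup S"
  have "t0 \<in> S"
    unfolding t0_def using closed_contains_Sup[OF _ \<open>bdd_above S\<close> \<open>closed S\<close>] \<open>0 \<in> S\<close> by auto
  then have "0 \<le> t0" "t0 < t1" "V t0 \<le> c"
    using above unfolding S_def by (auto simp: less_eq_real_def)
  then obtain d where "d > 0" and below: "\<And>h. 0 < h \<Longrightarrow> h < d \<Longrightarrow> V (t0 + h) < c"
    using stays_below_right_if_has_real_derivative[OF deriv[OF \<open>0 \<le> t0\<close>] \<open>0 \<le> t0\<close> \<open>V t0 \<le> c\<close> at_level[OF \<open>0 \<le> t0\<close>]] by blast
  define s where "s = min (t0 + d / 2) t1"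
  have "t0 < s" "s - t0 < d"
    unfolding s_def using \<open>d > 0\<close> \<open>t0 < t1\<close> by auto
  then have "s \<in> S"
    using below[of "s - t0"] \<open>0 \<le> t0\<close> unfolding S_def s_def by auto
  then have "s \<le> t0"
    unfolding t0_def using \<open>bdd_above S\<close> by (rule cSup_upper)
  with \<open>t0 < s\<close> show False by simp
qed

lemma exp_decay_if_has_real_derivative_le:
  fixes V D :: "real \<Rightarrow> real"
  assumes deriv: "\<And>t. t \<ge> 0 \<Longrightarrow> (V has_real_derivative D t) (at t within {0..})"
    and decrease: "\<And>t. t \<ge> 0 \<Longrightarrow> D t \<le> - k * V t"
    and t: "t \<ge> 0"
  shows "V t \<le> V 0 * exp (- k * t)"
proof -
  \<comment> \<open>the integrating factor exp (k s) turns the differential inequality into monotonicity of W\<close>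
  define W where "W s = V s * exp (k * s)" for s
  define W' where "W' s = exp (k * s) * (D s + k * V s)" for s
  have "(W has_real_derivative W' s) (at s within {0..t})" if "0 \<le> s" "s \<le> t" for s
    unfolding W_def W'_def
    by (rule derivative_eq_intros has_field_derivative_subset[OF deriv[OF that(1)]] | force simp: algebra_simps)+
  then obtain s where s: "s \<in> {0..t}" "W t - W 0 = W' s * t"
    using mvt_very_simple[OF t, of W "\<lambda>s. (*) (W' s)"] by (auto simp: has_field_derivative_def)
  have "W' s \<le> 0"
    unfolding W'_def using decrease[of s] s(1) by (simp add: mult_nonneg_nonpos)
  then have "W' s * t \<le> 0"
    using t by (rule mult_nonpos_nonneg)
  with s(2) have "V t * exp (k * t) \<le> V 0"
    unfolding W_def by simp
  then have "V t * exp (k * t) * exp (- k * t) \<le> V 0 * exp (- k * t)"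
    by simp
  then show ?thesis
    by (simp add: exp_minus field_simps)
qed

lemma has_real_derivative_comp_has_vector_derivative:
  fixes V :: "'a::real_normed_vector \<Rightarrow> real"
  assumes "(x has_vector_derivative x') (at s within S)" and "(V has_derivative V') (at (x s))"
  shows "((V \<circ> x) has_real_derivative V' x') (at s within S)"
proof -
  from diff_chain_within[OF assms(1)[unfolded has_vector_derivative_def] has_derivative_at_withinI[OF assms(2)]]
  show ?thesis
    unfolding has_field_derivative_def
    by (rule has_derivative_eq_rhs) (auto simp: linear_cmul[OF has_derivative_linear[OF assms(2)]])
qed

lemma exp_stabilizes_if_quadratic_Lyapunov:
  fixes F :: "real^'n::finite \<Rightarrow> real^'n" and V :: "real^'n \<Rightarrow> real"
  assumes V_deriv: "\<And>x. (V has_derivative V' x) (at x)"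
    and decrease: "\<And>x. x \<in> X \<Longrightarrow> V' x (F x) \<le> - k * V x"
    and lower: "\<And>x. x \<in> X \<Longrightarrow> a1 * (norm x)\<^sup>2 \<le> V x"
    and upper: "\<And>x. x \<in> X \<Longrightarrow> V x \<le> a2 * (norm x)\<^sup>2"
    and pos: "0 < a1" "0 < a2" "0 < k" "0 < c"
    and sublevel: "{x. V x \<le> c} \<subseteq> X"
  shows "exp_stabilizes F {x. V x \<le> c}"
  unfolding exp_stabilizes_def
proof (rule exI[of _ "sqrt (a2 / a1)"], intro conjI exI[of _ "k / 2"] ballI allI impI)
  fix x0 and x :: "real \<Rightarrow> real^'n" and t :: real
  assume x0: "x0 \<in> {x. V x \<le> c}"
    and sol: "x 0 = x0 \<and> (\<forall>t\<ge>0. (x has_vector_derivative F (x t)) (at t within {0..}))"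
    and t: "0 \<le> t"
  have deriv: "((V \<circ> x) has_real_derivative V' (x s) (F (x s))) (at s within {0..})" if "0 \<le> s" for s
    using sol that by (intro has_real_derivative_comp_has_vector_derivative V_deriv) auto
  have invariant: "V (x s) \<le> c" if "0 \<le> s" for s
  proof -
    have "(V \<circ> x) s \<le> c"
    proof (rule sublevel_invariant_if_has_real_derivative[OF deriv _ _ that])
      fix s assume "0 \<le> s" "(V \<circ> x) s = c"
      then have "x s \<in> X" using sublevel by auto
      with decrease[of "x s"] \<open>(V \<circ> x) s = c\<close> pos show "V' (x s) (F (x s)) < 0"
        by (simp add: mult_pos_pos order_le_less_trans[OF _ neg_less_0_iff_less[THEN iffD2]])
    qed (use x0 sol in auto)
    then show ?thesis by simp
  qed
  then have in_X: "x s \<in> X" if "0 \<le> s" for s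
    using sublevel that by auto
  have "V (x t) \<le> V x0 * exp (- k * t)"
    using exp_decay_if_has_real_derivative_le[OF deriv _ t, of k] decrease in_X sol by auto
  then have "a1 * (norm (x t))\<^sup>2 \<le> a2 * (norm x0)\<^sup>2 * exp (- k * t)"
    using lower[OF in_X[OF t]] upper[of x0] in_X[of 0] sol
    by (smt (verit) exp_gt_zero mult_right_mono)
  then have "(norm (x t))\<^sup>2 \<le> (sqrt (a2 / a1) * norm x0 * exp (- (k / 2) * t))\<^sup>2"
    using pos by (simp add: power_mult_distrib field_simps flip: exp_of_nat_mult)
  then show "norm (x t) \<le> sqrt (a2 / a1) * norm x0 * exp (- (k / 2) * t)"
    using pos by (auto intro: power2_le_imp_le)
qed (use pos in auto)

lemma exp_stabilizes_if_lifted_quadratic_Lyapunov: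
  fixes Phi :: "real^'n::finite \<Rightarrow> real^'N::finite" and S :: "real^'N^'N"
  assumes Phi_deriv: "\<And>x. (Phi has_derivative (\<lambda>h. J x *v h)) (at x)"
    and Phi_bounds: "\<And>x. x \<in> X \<Longrightarrow> norm x \<le> norm (Phi x) \<and> norm (Phi x) \<le> LPhi * norm x"
    and S_pd: "pos_def_sym S"
    and decrease: "\<And>x. x \<in> X \<Longrightarrow> 2 * ((S *v Phi x) \<bullet> (J x *v F x)) \<le> - k * (Phi x \<bullet> (S *v Phi x))"
    and pos: "0 < LPhi" "0 < k" "0 < c"
    and sublevel: "{x. Phi x \<bullet> (S *v Phi x) \<le> c} \<subseteq> X"
  shows "exp_stabilizes F {x. Phi x \<bullet> (S *v Phi x) \<le> c}"
proof -
  obtain m where "0 < m" and lower: "\<And>y. m * (norm y)\<^sup>2 \<le> y \<bullet> (S *v y)"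
    using pos_def_sym_quadratic_form_lower_bound[OF S_pd] by blast
  obtain K where "0 < K" and upper: "\<And>y. y \<bullet> (S *v y) \<le> K * (norm y)\<^sup>2"
    using quadratic_form_upper_bound by blast
  show ?thesis
  proof (rule exp_stabilizes_if_quadratic_Lyapunov[where V' = "\<lambda>x h. 2 * ((S *v Phi x) \<bullet> (J x *v h))"])
    show "((\<lambda>x. Phi x \<bullet> (S *v Phi x)) has_derivative (\<lambda>h. 2 * ((S *v Phi x) \<bullet> (J x *v h)))) (at x)" for x
      using S_pd Phi_deriv by (intro quadratic_form_comp_has_derivative) (auto simp: pos_def_sym_def)
    show "m * (norm x)\<^sup>2 \<le> Phi x \<bullet> (S *v Phi x)" if "x \<in> X" for x
      using Phi_bounds[OF that] lower[of "Phi x"] \<open>0 < m\<close>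
      by (smt (verit) mult_left_mono norm_ge_zero power_mono)
    show "Phi x \<bullet> (S *v Phi x) \<le> K * LPhi\<^sup>2 * (norm x)\<^sup>2" if "x \<in> X" for x
      using Phi_bounds[OF that] upper[of "Phi x"] \<open>0 < K\<close>
      by (smt (verit) mult_left_mono norm_ge_zero power_mono power_mult_distrib mult.assoc)
    show "2 * ((S *v Phi x) \<bullet> (J x *v F x)) \<le> - k * (Phi x \<bullet> (S *v Phi x))" if "x \<in> X" for x
      using decrease[OF that] .
  qed (use \<open>0 < m\<close> \<open>0 < K\<close> pos sublevel in simp_all)
qed

theorem theorem1:
  fixes f :: "real^'n \<Rightarrow> real^'n"
    and g :: "'m::finite \<Rightarrow> real^'n \<Rightarrow> real^'n"
    and X :: "(real^'n) set"
    and Phi :: "real^'n \<Rightarrow> real^'N::finite"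
    and J :: "real^'n \<Rightarrow> real^'n^'N"
    and LPhi cx cu rho cstar :: real
    and A :: "real^'N^'N" and B0 :: "real^'m^'N" and B :: "'m \<Rightarrow> real^'N^'N"
    and alpha beta :: nat
    and P :: "real^'N^'N"
    and L :: "real^'N \<Rightarrow> real^'N^'m"
    and tau :: "real^'N \<Rightarrow> real"
  assumes f0: "f 0 = 0"
    and Xcomp: "compact X"
    and Phi_deriv: "\<forall>x. (Phi has_derivative (\<lambda>h. J x *v h)) (at x)"
    and J_cont: "continuous_on UNIV J"
    and Phi0: "Phi 0 = 0"
    and LPhi_pos: "LPhi > 0"
    and Phi_bounds: "\<forall>x\<in>X. norm x \<le> norm (Phi x) \<and> norm (Phi x) \<le> LPhi * norm x"
    and cx_pos: "cx > 0" and cu_pos: "cu > 0"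
    and res_bound: "\<forall>x\<in>X. \<forall>u. norm (residual f g Phi J A B0 B x u)
                                  \<le> cx * norm (Phi x) + cu * norm u"
    and alpha_ge: "alpha \<ge> 1" "alpha \<ge> beta"
    and P_pd: "pos_def_sym P"
    and L_poly: "\<forall>i j. mpoly_deg (2 * alpha - 1) (\<lambda>z. L z $ i $ j)"
    and tau_sos: "is_SOS_plus beta tau"
    and rho_pos: "rho > 0"
    and Q_sos: "is_SOS_mat alpha (Qmat A B0 B P L tau rho cx cu)"
    and cstar_max: "cstar > 0" "Omega Phi P cstar \<subseteq> X"
                   "\<forall>c>0. Omega Phi P c \<subseteq> X \<longrightarrow> c \<le> cstar"
  shows "exp_stabilizes
           (\<lambda>x. fc f g x (L (Phi x) *v (matrix_inv P *v Phi x)))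
           (Omega Phi P cstar)"
proof -
  obtain KP where "0 < KP" and P_upper: "\<And>v. v \<bullet> (P *v v) \<le> KP * (norm v)\<^sup>2"
    using quadratic_form_upper_bound by blast
  have "exp_stabilizes (\<lambda>x. fc f g x (L (Phi x) *v (matrix_inv P *v Phi x)))
      {x. Phi x \<bullet> (matrix_inv P *v Phi x) \<le> cstar}"
  proof (rule exp_stabilizes_if_lifted_quadratic_Lyapunov[where k = "rho / KP"])
    fix x
    assume "x \<in> X"
    define v where "v = matrix_inv P *v Phi x"
    have "Phi x \<bullet> v = v \<bullet> (P *v v)"
      unfolding v_def
      by (simp add: matrix_vector_mul_assoc pos_def_sym_matrix_inv_mult(1)[OF P_pd] inner_commute)
    then have "- rho * (norm v)\<^sup>2 \<le> - (rho / KP) * (Phi x \<bullet> v)"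
      using P_upper[of v] \<open>0 < KP\<close> rho_pos by (simp add: field_simps)
    with closed_loop_lifted_Lyapunov_decrease[OF Q_sos P_pd _ is_SOS_plus_pos[OF tau_sos] cx_pos cu_pos]
    show "2 * (v \<bullet> (J x *v fc f g x (L (Phi x) *v v))) \<le> - (rho / KP) * (Phi x \<bullet> v)"
      using res_bound \<open>x \<in> X\<close> unfolding v_def by (meson order_trans)
  qed (use Phi_deriv Phi_bounds pos_def_sym_matrix_inv[OF P_pd] LPhi_pos rho_pos \<open>0 < KP\<close>
       cstar_max(1,2) in \<open>simp_all add: Omega_def\<close>)
  then show ?thesis
    unfolding Omega_def .
qed

end
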